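(* Assume the standing assumptions (i)–(viii) below and let $\delta\in(0,1)$, $T\ge1$. Consider RFedAGS with fixed batch size $B_{t,k}=\bar B$ and fixed step size $\alpha_{t,k}=\bar\alpha$, and let $\tilde K\ge2$ be an integer such that $2-\delta\ge L\bar\alpha$ and, for every $K\in\{2,\dots,\tilde K\}$, $1\ge L^2\bar\alpha^2M(K+1)(K-2)+\bar\alpha LK$ and $1-\delta\ge2L^2\bar\alpha^2M$. For $K\in\{1,\dots,\tilde K\}$ define \[ Q_1(K)=\frac{2(F(\tilde x_1)-F(x^* ))}{T(K-1+\delta)\bar\alpha}+\frac{\bar\alpha K\sigma^2L}{(K-1+\delta)\bar B}\Big(\frac{\bar\alpha(2K-1)(K-1)ML}{3}+\frac KS\Big), \] the upper bound on $\frac1T\mathbb{E}[\sum_{t=1}^T\|\mathrm{grad}F(\tilde x_t)\|^2]$ obtained when RFedAGS is run with $K$ local steps, and call $K^*\in\arg\min_{K\in\{1,\dots,\tilde K\}}Q_1(K)$ an optimal choice of $K$. If \[ F(\tilde x_1)-F(x^* )>\frac{(3\delta-1)\bar\alpha^2TL\sigma^2}{2S\bar B}+\frac{\delta\bar\alpha^3\sigma^2L^2TM}{\bar B}, \] then every optimal choice satisfies $K^*>1$.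
   Context: $\mathcal{M}$ is a Riemannian manifold with inner product $\langle\cdot,\cdot\rangle_x$ and norm $\|\cdot\|$ on each tangent space $\mathrm{T}_x\mathcal{M}$; $\mathrm{grad}$ is the Riemannian gradient, $0_x$ the zero of $\mathrm{T}_x\mathcal{M}$. $F(x)=\mathbb{E}_{\xi\sim\mathcal{D}}[f(x;\xi)]$ for a data distribution $\mathcal{D}$; $x^*\in\arg\min_{x\in\mathcal M}F(x)$. $\mathrm{R}$ is a smooth retraction ($\mathrm{R}_x(0_x)=x$, $\mathrm{D}\mathrm{R}_x(0_x)=\mathrm{id}$). A set $\mathcal{W}\subseteq\mathcal{M}$ is totally retractive if there is $r>0$ such that for every $y\in\mathcal{W}$, $\mathcal{W}\subseteq\mathrm{R}_y(\mathbb{B}(0_y,r))$ and $\mathrm{R}_y$ is a diffeomorphism on $\mathbb{B}(0_y,r)$; then $\mathrm{R}_x^{-1}(y)$ is defined for $x,y\in\mathcal{W}$. A vector transport $\Gamma$ associated with $\mathrm{R}$ gives, for $x,y\in\mathcal{W}$, a linear map $\Gamma_x^y:\mathrm{T}_x\mathcal{M}\to\mathrm{T}_y\mathcal{M}$; it is isometric if it preserves inner products. Algorithm RFedAGS (with $S$ agents, $K$ local steps, step sizes $\alpha_{t,k}>0$, batch sizes $B_{t,k}\in\mathbb{N}$, initial point $\tilde x_1$): for $t=1,2,\dots$, for each agent $j$ set $x_{t,0}^j=\tilde x_t$, $\zeta_{t,0}^j=0_{\tilde x_t}$; for $k=1,\dots,K$ agent $j$ draws a mini-batch $\mathcal{B}^j_{t,k-1}$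 of $B_{t,k-1}$ i.i.d. samples $\xi^j_{t,k-1,s}\sim\mathcal{D}$ (independent of all other samples), sets $\eta^j_{k-1}=-\frac{\alpha_{t,k-1}}{B_{t,k-1}}\sum_{s\in\mathcal{B}^j_{t,k-1}}\mathrm{grad}f(x^j_{t,k-1};\xi^j_{t,k-1,s})$, $x^j_{t,k}=\mathrm{R}_{x^j_{t,k-1}}(\eta^j_{k-1})$, $\zeta^j_{t,k}=\zeta^j_{t,k-1}+\Gamma_{x^j_{t,k-1}}^{\tilde x_t}(\eta^j_{k-1})$; then $\tilde x_{t+1}=\mathrm{R}_{\tilde x_t}\big(\frac1S\sum_{j}\zeta^j_{t,K}\big)$. $\mathbb{E}$ denotes total expectation. Standing assumptions: (i) $x^*$, all $\tilde x_t$ and all $x^j_{t,k}$ lie in a compact connected set $\mathcal{W}$ totally retractive w.r.t. $\mathrm{R}$; (ii) each $f(\cdot;\xi)$ is continuously differentiable; (iii) $\Gamma$ is isometric; (iv) $F$ is $L$-retraction-smooth on $\mathcal{W}$ ($F(\mathrm{R}_x(\eta))\le F(x)+\langle\mathrm{grad}F(x),\eta\rangle+\frac L2\|\eta\|^2$ for $x\in\mathcal{W}$, $\mathrm{R}_x(\eta)\in\mathcal{W}$) and $L$-Lipschitz continuously differentiable w.r.t. $\Gamma$ on $\mathcal{W}$ ($\|\Gamma_x^y(\mathrm{grad}F(x))-\mathrm{grad}F(y)\|\le L\|\eta\|$ whenever $x\in\mathcal{W}$, $y=\mathrm{R}_x(\eta)\in\mathcal{W}$); (v) $\alpha_{t,k}\le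 A$ for all $t,k$; (vi) $\mathbb{E}_\xi[\mathrm{grad}f(x;\xi)]=\mathrm{grad}F(x)$; (vii) there is $\sigma>0$ with $\mathbb{E}\|\frac1B\sum_s\mathrm{grad}f(x;\xi_s)-\mathrm{grad}F(x)\|^2\le\sigma^2/B$ for every $x\in\mathcal{W}$ and every mini-batch of $B$ i.i.d. samples; (viii) there is $C_1>0$ with $\|\mathrm{grad}f(x;\xi)\|\le C_1$ for all $x\in\mathcal{W}$ and all $\xi$. Constant $M$: with $P_{x,y}=\mathrm{R}_y^{-1}\circ\mathrm{R}_x$ for $x,y\in\mathcal{W}$, $C_2,C_3>0$ are constants (uniform bounds on the first and second derivatives of $P_{x,y}$ on its compact domain) such that for all $x,y\in\mathcal{W}$ and $\eta\in\mathrm{T}_x\mathcal{M}$ with $\mathrm{R}_x(\eta)\in\mathcal{W}$: $\|\mathrm{D}P_{x,y}(0_x)\|_{\mathrm{op}}\le C_2$ and $\|P_{x,y}(\eta)-P_{x,y}(0_x)-\mathrm{D}P_{x,y}(0_x)[\eta]\|\le C_3\|\eta\|^2$. Then $M=C_2^2+A^2C_1^2C_3^2$. *)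

theory Defs
  imports Main "HOL-Library.Sum_of_Squares" Complex_Main
begin

text \<open>Upper bound Q_1(K) on (1/T) E[sum_t |grad F(x_t)|^2] for RFedAGS with K local steps,
  fixed step size alpha, fixed batch size B, S agents, T outer iterations.
  Here gap = F(x_1) - F(x^*).\<close>
definition Q1 :: "real \<Rightarrow> nat \<Rightarrow> real \<Rightarrow> real \<Rightarrow> real \<Rightarrow> real \<Rightarrow> real \<Rightarrow> nat \<Rightarrow> nat \<Rightarrow> nat \<Rightarrow> real" where
  "Q1 gap T \<delta> \<alpha> \<sigma> L M S B K =
     2 * gap / (real T * (real K - 1 + \<delta>) * \<alpha>)
     + \<alpha> * real K * \<sigma>\<^sup>2 * L / ((real K - 1 + \<delta>) * real B)
       * (\<alpha> * (2 * real K - 1) * (real K - 1) * M * L / 3 + real K / real S)"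

end

theory Submission
  imports Defs
begin

text \<open>The hypothesis on \<open>F(x\<^sub>1) - F(x\<^sup>*)\<close> is exactly the condition \<open>Q\<^sub>1(2) < Q\<^sub>1(1)\<close>:
  clearing denominators, \<open>Q\<^sub>1(1) - Q\<^sub>1(2)\<close> is a positive multiple of the difference between
  the gap and the threshold. Since \<open>K = 2\<close> is admissible, \<open>K = 1\<close> is never a minimiser.\<close>

lemma Q1_one_minus_Q1_two:
  assumes "\<delta> > 0" "\<alpha> > 0" "T > 0" "S > 0" "B > 0"
  shows "Q1 g T \<delta> \<alpha> \<sigma> L M S B 1 - Q1 g T \<delta> \<alpha> \<sigma> L M S B 2
       = 2 * (g - ((3 * \<delta> - 1) * \<alpha>\<^sup>2 * real T * L * \<sigma>\<^sup>2 / (2 * real S * real B)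
                   + \<delta> * \<alpha> ^ 3 * \<sigma>\<^sup>2 * L\<^sup>2 * real T * M / real B))
         / (real T * \<alpha> * \<delta> * (1 + \<delta>))"
proof -
  have "1 + \<delta> \<noteq> 0"
    using assms(1) by simp
  with assms show ?thesis
    unfolding Q1_def
    by (simp add: divide_simps power2_eq_square power3_eq_cube, simp add: algebra_simps)
qed

lemma Q1_two_less_Q1_one:
  assumes "\<delta> > 0" "\<alpha> > 0" "T > 0" "S > 0" "B > 0"
    and "g > (3 * \<delta> - 1) * \<alpha>\<^sup>2 * real T * L * \<sigma>\<^sup>2 / (2 * real S * real B)
             + \<delta> * \<alpha> ^ 3 * \<sigma>\<^sup>2 * L\<^sup>2 * real T * M / real B"
  shows "Q1 g T \<delta> \<alpha> \<sigma> L M S B 2 < Q1 g T \<delta> \<alpha> \<sigma> L M S B 1"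
proof -
  have "real T * \<alpha> * \<delta> * (1 + \<delta>) > 0"
    using assms(1-3) by simp
  then have "Q1 g T \<delta> \<alpha> \<sigma> L M S B 1 - Q1 g T \<delta> \<alpha> \<sigma> L M S B 2 > 0"
    unfolding Q1_one_minus_Q1_two[OF assms(1-5)]
    by (rule divide_pos_pos[rotated])
      (use assms(6) in \<open>simp only: mult_pos_pos zero_less_numeral diff_gt_0_iff_gt\<close>)
  then show ?thesis
    by simp
qed

theorem theorem6:
  fixes F :: "'m \<Rightarrow> real" and W :: "'m set" and x1 xstar :: 'm
    and L \<sigma> \<delta> \<alpha> A C1 C2 C3 M :: real
    and S B T Ktil :: nat
  assumes xstar_in: "xstar \<in> W" and x1_in: "x1 \<in> W"
    and xstar_min: "\<forall>x. F xstar \<le> F x"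
    and L_pos: "L > 0" and sigma_pos: "\<sigma> > 0"
    and C_pos: "C1 > 0" "C2 > 0" "C3 > 0"
    and alpha_pos: "\<alpha> > 0" and alpha_le_A: "\<alpha> \<le> A"
    and M_def: "M = C2\<^sup>2 + A\<^sup>2 * C1\<^sup>2 * C3\<^sup>2"
    and S_pos: "S \<ge> 1" and B_pos: "B \<ge> 1"
    and delta: "0 < \<delta>" "\<delta> < 1" and T_ge: "T \<ge> 1"
    and Ktil: "Ktil \<ge> 2"
    and step1: "2 - \<delta> \<ge> L * \<alpha>"
    and step2: "\<forall>K\<in>{2..Ktil}. 1 \<ge> L\<^sup>2 * \<alpha>\<^sup>2 * M * (real K + 1) * (real K - 2) + \<alpha> * L * real K"
    and step3: "1 - \<delta> \<ge> 2 * L\<^sup>2 * \<alpha>\<^sup>2 * M"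
    and gap: "F x1 - F xstar > (3 * \<delta> - 1) * \<alpha>\<^sup>2 * real T * L * \<sigma>\<^sup>2 / (2 * real S * real B)
                               + \<delta> * \<alpha> ^ 3 * \<sigma>\<^sup>2 * L\<^sup>2 * real T * M / real B"
  shows "\<forall>Kstar. is_arg_min (Q1 (F x1 - F xstar) T \<delta> \<alpha> \<sigma> L M S B) (\<lambda>K. K \<in> {1..Ktil}) Kstar
                 \<longrightarrow> Kstar > 1"
proof (intro allI impI)
  fix Kstar
  let ?Q = "Q1 (F x1 - F xstar) T \<delta> \<alpha> \<sigma> L M S B"
  assume "is_arg_min ?Q (\<lambda>K. K \<in> {1..Ktil}) Kstar"
  then have Kstar_range: "Kstar \<in> {1..Ktil}" and Kstar_min: "\<not> ?Q 2 < ?Q Kstar"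
    using Ktil by (auto simp: is_arg_min_def)
  have "?Q 2 < ?Q 1"
    using Q1_two_less_Q1_one[OF delta(1) alpha_pos _ _ _ gap] T_ge S_pos B_pos by simp
  with Kstar_range Kstar_min show "Kstar > 1"
    by (metis atLeastAtMost_iff le_neq_implies_less)
qed

end
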